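(* Let $0<s_1<1-s_1<s_2<1$. There is $\epsilon_0=\epsilon_0(s_1,s_2)>0$ such that for every $\epsilon\in(0,\epsilon_0)$ for which $m=\epsilon^{-1}/4$ is an integer there is $n_0$ with the following property: if $n\geq n_0$, $H\in Irr(m)$, and $G$ is an $n$-blowup of $H$, then every $\epsilon$-regular partition of $G$ has at least $\epsilon^{-s_2}$ parts.
   Context: Graphs $G=(V,E)$, $E\subseteq\binom V2$. $d_G(X,Y)=|\{(x,y)\in X\times Y:xy\in E\}|/(|X||Y|)$; $(X,Y)$ is $\epsilon$-regular if $|d_G(X,Y)-d_G(X',Y')|\le\epsilon$ for $X'\subseteq X,Y'\subseteq Y$ with $|X'|\ge\epsilon|X|,|Y'|\ge\epsilon|Y|$; a partition $\mathcal P$ of $V$ (not necessarily equitable; pairs $(X,X)$ allowed) is $\epsilon$-regular if at least $(1-\epsilon)|V|^2$ pairs of $V^2$ lie in $X\times Y$ for some $\epsilon$-regular $(X,Y)\in\mathcal P^2$. $Irr(m)$ is the set of graphs on $\{a_1,..,a_m,b_1,..,b_m\}$ ($2m$ distinct vertices) such that either $a_ib_j\in E$ iff $i\le j$ for all $i,j$, or $a_ib_j\in E$ iff $i=j$ for all $i,j$, or $a_ib_j\in E$ iff $i\ne j$ for all $i,j$. For a graph $H=(U,E)$, an $n$-blowup of $H$ is any graph with vertex set $\bigcup_{u\in U}V_u$ (disjoint, $|V_u|=n$) such that for $u\neq u'$, all pairs $xy$ with $x\in V_u,y\in V_{u'}$ are edges if $uu'\in E$ and non-edges if $uu'\notin E$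 (pairs inside a $V_u$ arbitrary). *)

theory Defs
  imports Complex_Main
begin

definition is_graph :: "'a set \<Rightarrow> 'a set set \<Rightarrow> bool" where
  "is_graph V E \<longleftrightarrow> finite V \<and> (\<forall>e\<in>E. \<exists>x y. x \<noteq> y \<and> x \<in> V \<and> y \<in> V \<and> e = {x, y})"

definition density :: "'a set set \<Rightarrow> 'a set \<Rightarrow> 'a set \<Rightarrow> real" where
  "density E X Y = real (card {(x, y). x \<in> X \<and> y \<in> Y \<and> {x, y} \<in> E}) / (real (card X) * real (card Y))"

definition regular_pair :: "'a set set \<Rightarrow> real \<Rightarrow> 'a set \<Rightarrow> 'a set \<Rightarrow> bool" where
  "regular_pair E eps X Y \<longleftrightarrow>
     (\<forall>X' Y'. X' \<subseteq> X \<and> Y' \<subseteq> Y \<and> real (card X') \<ge> eps * real (card X)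
        \<and> real (card Y') \<ge> eps * real (card Y)
        \<longrightarrow> \<bar>density E X Y - density E X' Y'\<bar> \<le> eps)"

definition is_partition :: "'a set \<Rightarrow> 'a set set \<Rightarrow> bool" where
  "is_partition V P \<longleftrightarrow> (\<forall>X\<in>P. X \<noteq> {}) \<and> \<Union>P = V \<and>
     (\<forall>X\<in>P. \<forall>Y\<in>P. X \<noteq> Y \<longrightarrow> X \<inter> Y = {})"

definition regular_partition :: "'a set \<Rightarrow> 'a set set \<Rightarrow> real \<Rightarrow> 'a set set \<Rightarrow> bool" where
  "regular_partition V E eps P \<longleftrightarrow> is_partition V P \<and>
     real (card {(x, y). x \<in> V \<and> y \<in> V \<and>
        (\<exists>X\<in>P. \<exists>Y\<in>P. x \<in> X \<and> y \<in> Y \<and> regular_pair E eps X Y)})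
       \<ge> (1 - eps) * real (card V) ^ 2"

text \<open>The graphs of Irr(m) live on the vertex set {a_1..a_m, b_1..b_m}, where
  a_i is represented by Inl i and b_i by Inr i.\<close>
definition irr_vertices :: "nat \<Rightarrow> (nat + nat) set" where
  "irr_vertices m = Inl ` {1..m} \<union> Inr ` {1..m}"

definition Irr :: "nat \<Rightarrow> (nat + nat) set set set" where
  "Irr m = {EH. is_graph (irr_vertices m) EH \<and>
     ((\<forall>i\<in>{1..m}. \<forall>j\<in>{1..m}. {Inl i, Inr j} \<in> EH \<longleftrightarrow> i \<le> j) \<or>
      (\<forall>i\<in>{1..m}. \<forall>j\<in>{1..m}. {Inl i, Inr j} \<in> EH \<longleftrightarrow> i = j) \<or>
      (\<forall>i\<in>{1..m}. \<forall>j\<in>{1..m}. {Inl i, Inr j} \<in> EH \<longleftrightarrow> i \<noteq> j))}"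

definition is_blowup :: "nat \<Rightarrow> 'u set \<Rightarrow> 'u set set \<Rightarrow> 'v set \<Rightarrow> 'v set set \<Rightarrow> bool" where
  "is_blowup n U EH V E \<longleftrightarrow> is_graph V E \<and>
     (\<exists>part :: 'u \<Rightarrow> 'v set.
        (\<forall>u\<in>U. card (part u) = n) \<and>
        (\<forall>u\<in>U. \<forall>u'\<in>U. u \<noteq> u' \<longrightarrow> part u \<inter> part u' = {}) \<and>
        V = (\<Union>u\<in>U. part u) \<and>
        (\<forall>u\<in>U. \<forall>u'\<in>U. u \<noteq> u' \<longrightarrow>
           (\<forall>x\<in>part u. \<forall>y\<in>part u'. {x, y} \<in> E \<longleftrightarrow> {u, u'} \<in> EH)))"

end

theory Submission
  imports Defs
begin

(* Let A_i, B_i be the blobs of a_i, b_i. In all three types of Irr(m) the pairs a_i b_i have one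
   adjacency tau and the pairs a_i b_j with j < i the opposite one, so the 2mn^2 ordered pairs in the
   blocks A_i x B_i and B_i x A_i all have adjacency tau. Fix an eps-regular pair (X, Y) of parts and
   let h be the largest index such that A_h, ..., A_m still contain an eps-fraction of X (or h = 1).
   If B_1, ..., B_(h-1) contain an eps-fraction of Y, these two subsets span a pair of adjacency
   not-tau throughout, so regularity leaves at most eps |X| |Y| pairs of adjacency tau in X x Y.
   Otherwise X x Y meets the blocks A_i x B_i in at most eps n (|X| + |Y|) + |X \<inter> A_h| |Y \<inter> B_h|
   pairs, and the last term sums to at most n^2 over Y. Any pair (X, Y) meets the blocks in at most
   n |Y| pairs, which is at most |X| |Y| / 2 once |X| >= 2n; irregular pairs cover at most eps |V|^2
   pairs. Summing over all pairs of parts gives 2mn^2 <= 6 eps m^2 n^2 + 8 eps m n^2 |P| + 4 n^2 |P|,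
   so eps m = 1/4 forces |P| >= m/12 = 1/(48 eps), which exceeds eps^(-s2) for small eps. *)

lemma density_commute: "density E X Y = density E Y X"
proof -
  have "{(x, y). x \<in> Y \<and> y \<in> X \<and> {x, y} \<in> E} = prod.swap ` {(x, y). x \<in> X \<and> y \<in> Y \<and> {x, y} \<in> E}"
    by (auto simp: insert_commute image_iff)
  then show ?thesis
    unfolding density_def by (simp add: card_image mult.commute)
qed

lemma regular_pair_commute: "regular_pair E eps X Y \<Longrightarrow> regular_pair E eps Y X"
  unfolding regular_pair_def by (metis density_commute)

lemma card_adjacency_pairs:
  assumes "finite X" and "finite Y"
  shows "card {(x, y) \<in> X \<times> Y. {x, y} \<in> E \<longleftrightarrow> tau}
    = (if tau then density E X Y else 1 - density E X Y) * card X * card Y"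
proof -
  let ?edges = "{(x, y) \<in> X \<times> Y. {x, y} \<in> E}"
  have edges_sub: "?edges \<subseteq> X \<times> Y"
    by auto
  have edges: "card ?edges = density E X Y * card X * card Y"
    unfolding density_def using assms by (cases "X = {} \<or> Y = {}") auto
  show ?thesis
  proof (cases tau)
    case True
    then show ?thesis
      using edges by simp
  next
    case False
    then have "{(x, y) \<in> X \<times> Y. {x, y} \<in> E \<longleftrightarrow> tau} = X \<times> Y - ?edges"
      by auto
    moreover have "card (X \<times> Y - ?edges) = card X * card Y - card ?edges"
      using assms edges_sub by (simp add: card_Diff_subset finite_subset card_cartesian_product)
    moreover have "card ?edges \<le> card X * card Y"
      using assms edges_sub card_mono[of "X \<times> Y"] by (simp add: card_cartesian_product)
    ultimately show ?thesis
      using False edges by (simp add: of_nat_diff algebra_simps)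
  qed
qed

lemma regular_pair_homogeneous_subpair:
  fixes eps :: real
  assumes reg: "regular_pair E eps X Y" and fin: "finite X" "finite Y"
    and sub: "X' \<subseteq> X" "Y' \<subseteq> Y" and ne: "X' \<noteq> {}" "Y' \<noteq> {}"
    and large: "eps * card X \<le> card X'" "eps * card Y \<le> card Y'"
    and hom: "\<forall>x\<in>X'. \<forall>y\<in>Y'. {x, y} \<in> E \<longleftrightarrow> \<not> tau"
  shows "card {(x, y) \<in> X \<times> Y. {x, y} \<in> E \<longleftrightarrow> tau} \<le> eps * card X * card Y"
proof -
  let ?f = "\<lambda>S T. if tau then density E S T else 1 - density E S T"
  have fin': "finite X'" "finite Y'"
    using fin sub finite_subset by auto
  have no_pairs: "{(x, y) \<in> X' \<times> Y'. {x, y} \<in> E \<longleftrightarrow> tau} = {}"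
    using hom by auto
  have "?f X' Y' * card X' * card Y' = 0"
    using card_adjacency_pairs[OF fin', of E tau, unfolded no_pairs] by simp
  then have "?f X' Y' = 0"
    using fin' ne by simp
  moreover have "\<bar>density E X Y - density E X' Y'\<bar> \<le> eps"
    using reg sub large unfolding regular_pair_def by blast
  ultimately have "?f X Y \<le> eps"
    by (auto split: if_splits)
  then show ?thesis
    using card_adjacency_pairs[OF fin, of E tau] by (simp add: mult_right_mono)
qed

lemma finite_partition: "is_partition V P \<Longrightarrow> finite V \<Longrightarrow> finite P"
  unfolding is_partition_def by (auto intro: finite_subset[of P "Pow V"])

lemma finite_partition_part: "is_partition V P \<Longrightarrow> finite V \<Longrightarrow> X \<in> P \<Longrightarrow> finite X"
  unfolding is_partition_def by (auto intro: finite_subset[of X V])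

lemma sum_card_Int_partition:
  assumes P: "is_partition V P" and "finite V" and "S \<subseteq> V"
  shows "(\<Sum>X\<in>P. card (X \<inter> S)) = card S"
proof -
  have "S = (\<Union>X\<in>P. X \<inter> S)"
    using P \<open>S \<subseteq> V\<close> unfolding is_partition_def by auto
  moreover have "card (\<Union>X\<in>P. X \<inter> S) = (\<Sum>X\<in>P. card (X \<inter> S))"
  proof (rule card_UN_disjoint)
    show "finite P"
      using P \<open>finite V\<close> by (rule finite_partition)
    show "\<forall>X\<in>P. finite (X \<inter> S)"
      using \<open>finite V\<close> \<open>S \<subseteq> V\<close> by (meson finite_Int finite_subset)
    show "\<forall>X\<in>P. \<forall>Y\<in>P. X \<noteq> Y \<longrightarrow> X \<inter> S \<inter> (Y \<inter> S) = {}"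
      using P unfolding is_partition_def by blast
  qed
  ultimately show ?thesis by simp
qed

lemma sum_card_partition:
  assumes "is_partition V P" and "finite V"
  shows "(\<Sum>X\<in>P. card X) = card V"
proof -
  have "X \<inter> V = X" if "X \<in> P" for X
    using assms that unfolding is_partition_def by blast
  then show ?thesis
    using sum_card_Int_partition[OF assms subset_refl] by simp
qed

lemma card_partition_pairs:
  assumes P: "is_partition V P" and "finite V"
  shows "card {(x, y). x \<in> V \<and> y \<in> V \<and> (\<exists>X\<in>P. \<exists>Y\<in>P. x \<in> X \<and> y \<in> Y \<and> Q X Y)}
    = (\<Sum>X\<in>P. \<Sum>Y\<in>P. if Q X Y then card X * card Y else 0)"
proof -
  have finP: "finite P" and finX: "\<And>X. X \<in> P \<Longrightarrow> finite X"
    using assms finite_partition finite_partition_part by auto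
  have disj: "\<And>X Y. X \<in> P \<Longrightarrow> Y \<in> P \<Longrightarrow> X \<noteq> Y \<Longrightarrow> X \<inter> Y = {}"
    using P unfolding is_partition_def by blast
  have "{(x, y). x \<in> V \<and> y \<in> V \<and> (\<exists>X\<in>P. \<exists>Y\<in>P. x \<in> X \<and> y \<in> Y \<and> Q X Y)}
      = (\<Union>X\<in>P. \<Union>Y\<in>{Y \<in> P. Q X Y}. X \<times> Y)"
    using P unfolding is_partition_def by blast
  also have "card \<dots> = (\<Sum>X\<in>P. card (\<Union>Y\<in>{Y \<in> P. Q X Y}. X \<times> Y))"
    using finP finX disj by (intro card_UN_disjoint) auto
  also have "\<dots> = (\<Sum>X\<in>P. \<Sum>Y\<in>{Y \<in> P. Q X Y}. card X * card Y)"
    using finP finX disj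
    by (intro sum.cong refl, subst card_UN_disjoint) (auto simp: card_cartesian_product)
  also have "\<dots> = (\<Sum>X\<in>P. \<Sum>Y\<in>P. if Q X Y then card X * card Y else 0)"
    using finP by (simp add: sum.inter_filter)
  finally show ?thesis .
qed

lemma regular_partition_irregular_mass:
  fixes eps :: real
  assumes reg: "regular_partition V E eps P" and "finite V"
  shows "(\<Sum>X\<in>P. \<Sum>Y\<in>P. if regular_pair E eps X Y then 0 else real (card X) * card Y)
    \<le> eps * card V ^ 2"
proof -
  let ?c = "\<lambda>X Y. real (card X) * card Y"
  have P: "is_partition V P"
    using reg unfolding regular_partition_def by simp
  have "(\<Sum>X\<in>P. \<Sum>Y\<in>P. ?c X Y) = card V ^ 2"
    using sum_card_partition[OF P \<open>finite V\<close>]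
    by (simp add: sum_product[symmetric] power2_eq_square flip: of_nat_sum)
  moreover have "(1 - eps) * card V ^ 2 \<le> (\<Sum>X\<in>P. \<Sum>Y\<in>P. if regular_pair E eps X Y then ?c X Y else 0)"
    using reg card_partition_pairs[OF P \<open>finite V\<close>, of "regular_pair E eps"]
    unfolding regular_partition_def by (simp add: of_nat_sum if_distrib[of real] cong: if_cong)
  moreover have "(\<Sum>X\<in>P. \<Sum>Y\<in>P. if regular_pair E eps X Y then 0 else ?c X Y)
      = (\<Sum>X\<in>P. \<Sum>Y\<in>P. ?c X Y) - (\<Sum>X\<in>P. \<Sum>Y\<in>P. if regular_pair E eps X Y then ?c X Y else 0)"
    by (auto simp: sum_subtractf[symmetric] intro!: sum.cong)
  ultimately show ?thesis
    by (simp add: algebra_simps)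
qed

lemma sum_mult_le_split:
  fixes a b :: "nat \<Rightarrow> real"
  assumes h: "h \<in> {1..m}"
    and a: "\<And>i. i \<in> {1..m} \<Longrightarrow> 0 \<le> a i \<and> a i \<le> c"
    and b: "\<And>i. i \<in> {1..m} \<Longrightarrow> 0 \<le> b i \<and> b i \<le> c"
  shows "(\<Sum>i=1..m. a i * b i) \<le> c * (\<Sum>i\<in>{1..<h}. b i) + a h * b h + c * (\<Sum>i=Suc h..m. a i)"
proof -
  have split: "(\<Sum>i=1..m. f i) = (\<Sum>i\<in>{1..<h}. f i) + f h + (\<Sum>i=Suc h..m. f i)" for f :: "nat \<Rightarrow> real"
  proof -
    have "{1..m} = {1..<h} \<union> {h..m}"
      using h by auto
    then have "(\<Sum>i=1..m. f i) = (\<Sum>i\<in>{1..<h}. f i) + (\<Sum>i=h..m. f i)"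
      by (simp add: sum.union_disjoint ivl_disj_int)
    also have "(\<Sum>i=h..m. f i) = f h + (\<Sum>i=Suc h..m. f i)"
      using h by (simp add: sum.atLeast_Suc_atMost)
    finally show ?thesis by simp
  qed
  have "(\<Sum>i\<in>{1..<h}. a i * b i) \<le> (\<Sum>i\<in>{1..<h}. c * b i)"
    using h a b by (intro sum_mono mult_right_mono) auto
  moreover have "(\<Sum>i=Suc h..m. a i * b i) \<le> (\<Sum>i=Suc h..m. c * a i)"
    using a b by (subst mult.commute, intro sum_mono mult_right_mono) auto
  ultimately show ?thesis
    using split[of "\<lambda>i. a i * b i"] by (simp only: sum_distrib_left)
qed

lemma tail_sum_threshold:
  fixes f :: "nat \<Rightarrow> real"
  assumes "1 \<le> m" and "0 < \<alpha>"
  obtains h where "h \<in> {1..m}" and "(\<Sum>i=Suc h..m. f i) < \<alpha>" and "1 < h \<Longrightarrow> \<alpha> \<le> (\<Sum>i=h..m. f i)"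
proof -
  let ?H = "{h \<in> {1..m}. h = 1 \<or> \<alpha> \<le> (\<Sum>i=h..m. f i)}"
  define h where "h = Max ?H"
  have fin: "finite ?H"
    by simp
  have "1 \<in> ?H"
    using assms by simp
  then have h: "h \<in> ?H"
    unfolding h_def using fin by (intro Max_in) auto
  have h_max: "\<And>h'. h' \<in> ?H \<Longrightarrow> h' \<le> h"
    unfolding h_def using fin by (rule Max_ge)
  show ?thesis
  proof (rule that)
    show "h \<in> {1..m}" and "1 < h \<Longrightarrow> \<alpha> \<le> (\<Sum>i=h..m. f i)"
      using h by auto
    show "(\<Sum>i=Suc h..m. f i) < \<alpha>"
    proof (cases "Suc h \<le> m")
      case True
      then show ?thesis
        using h_max[of "Suc h"] by force
    qed (use \<open>0 < \<alpha>\<close> in simp)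
  qed
qed

lemma powr_neg_le_divide:
  fixes x s c :: real
  assumes "s < 1" and "0 < c" and "0 < x" and "x < c powr (1 / (1 - s))"
  shows "x powr (- s) \<le> c / x"
proof -
  have "x powr (1 - s) \<le> (c powr (1 / (1 - s))) powr (1 - s)"
    using assms by (intro powr_mono2) auto
  also have "\<dots> = c"
    using assms by (simp add: powr_powr)
  finally have "x powr (1 - s) / x \<le> c / x"
    using \<open>0 < x\<close> by (simp add: divide_right_mono)
  moreover have "x powr (1 - s) / x = x powr (- s)"
    using \<open>0 < x\<close> by (simp add: powr_diff powr_minus_divide)
  ultimately show ?thesis by simp
qed

lemma card_Int_UN_disjoint:
  assumes "finite X" and "finite S" and "\<And>i j. i \<in> S \<Longrightarrow> j \<in> S \<Longrightarrow> i \<noteq> j \<Longrightarrow> F i \<inter> F j = {}"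
  shows "card (X \<inter> (\<Union>i\<in>S. F i)) = (\<Sum>i\<in>S. card (X \<inter> F i))"
proof -
  have "X \<inter> (\<Union>i\<in>S. F i) = (\<Union>i\<in>S. X \<inter> F i)"
    by blast
  also have "card \<dots> = (\<Sum>i\<in>S. card (X \<inter> F i))"
    using assms by (intro card_UN_disjoint) auto
  finally show ?thesis .
qed

locale irr_blowup =
  fixes m n :: nat and part :: "nat + nat \<Rightarrow> 'v set" and V :: "'v set" and E :: "'v set set"
    and EH :: "(nat + nat) set set" and tau :: bool
  assumes m_pos: "1 \<le> m" and n_pos: "1 \<le> n"
    and card_part: "\<And>u. u \<in> irr_vertices m \<Longrightarrow> card (part u) = n"
    and part_disjoint: "\<And>u u'. u \<in> irr_vertices m \<Longrightarrow> u' \<in> irr_vertices m \<Longrightarrow> u \<noteq> u' \<Longrightarrow> part u \<inter> part u' = {}"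
    and V_eq: "V = (\<Union>u\<in>irr_vertices m. part u)"
    and part_edges: "\<And>u u' x y. u \<in> irr_vertices m \<Longrightarrow> u' \<in> irr_vertices m \<Longrightarrow> u \<noteq> u' \<Longrightarrow>
           x \<in> part u \<Longrightarrow> y \<in> part u' \<Longrightarrow> {x, y} \<in> E \<longleftrightarrow> {u, u'} \<in> EH"
    and diagonal_edge: "\<And>i. i \<in> {1..m} \<Longrightarrow> {Inl i, Inr i} \<in> EH \<longleftrightarrow> tau"
    and lower_edge: "\<And>i j. i \<in> {1..m} \<Longrightarrow> j \<in> {1..m} \<Longrightarrow> j < i \<Longrightarrow> {Inl i, Inr j} \<in> EH \<longleftrightarrow> \<not> tau"
begin

definition A :: "nat \<Rightarrow> 'v set" where "A i = part (Inl i)"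
definition B :: "nat \<Rightarrow> 'v set" where "B i = part (Inr i)"

definition inA :: "'v set \<Rightarrow> nat \<Rightarrow> real" where "inA X i = card (X \<inter> A i)"
definition inB :: "'v set \<Rightarrow> nat \<Rightarrow> real" where "inB X i = card (X \<inter> B i)"

definition diag :: "'v set \<Rightarrow> 'v set \<Rightarrow> real" where
  "diag X Y = (\<Sum>i=1..m. inA X i * inB Y i)"

definition tau_pairs :: "'v set \<Rightarrow> 'v set \<Rightarrow> ('v \<times> 'v) set" where
  "tau_pairs X Y = {(x, y) \<in> X \<times> Y. {x, y} \<in> E \<longleftrightarrow> tau}"

lemma Inl_Inr_in_irr_vertices: "i \<in> {1..m} \<Longrightarrow> Inl i \<in> irr_vertices m" "i \<in> {1..m} \<Longrightarrow> Inr i \<in> irr_vertices m"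
  unfolding irr_vertices_def by auto

lemma finite_part: "u \<in> irr_vertices m \<Longrightarrow> finite (part u)"
  using card_part n_pos card.infinite by fastforce

lemma finite_V: "finite V"
  unfolding V_eq using finite_part by (simp add: irr_vertices_def)

lemma card_V: "card V = 2 * m * n"
proof -
  have "card (irr_vertices m) = 2 * m"
    unfolding irr_vertices_def by (subst card_Un_disjoint) (auto simp: card_image)
  moreover have "card V = (\<Sum>u\<in>irr_vertices m. card (part u))"
    unfolding V_eq using finite_part part_disjoint
    by (intro card_UN_disjoint) (auto simp: irr_vertices_def)
  ultimately show ?thesis
    using card_part by simp
qed

lemma A_subset_V: "i \<in> {1..m} \<Longrightarrow> A i \<subseteq> V"
  and B_subset_V: "i \<in> {1..m} \<Longrightarrow> B i \<subseteq> V"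
  and card_A: "i \<in> {1..m} \<Longrightarrow> card (A i) = n"
  and card_B: "i \<in> {1..m} \<Longrightarrow> card (B i) = n"
  unfolding A_def B_def V_eq using Inl_Inr_in_irr_vertices card_part by auto

lemma A_disjoint: "i \<in> {1..m} \<Longrightarrow> j \<in> {1..m} \<Longrightarrow> i \<noteq> j \<Longrightarrow> A i \<inter> A j = {}"
  and B_disjoint: "i \<in> {1..m} \<Longrightarrow> j \<in> {1..m} \<Longrightarrow> i \<noteq> j \<Longrightarrow> B i \<inter> B j = {}"
  and A_B_disjoint: "i \<in> {1..m} \<Longrightarrow> j \<in> {1..m} \<Longrightarrow> A i \<inter> B j = {}"
  unfolding A_def B_def using Inl_Inr_in_irr_vertices part_disjoint by auto

lemma edge_A_B:
  "i \<in> {1..m} \<Longrightarrow> j \<in> {1..m} \<Longrightarrow> x \<in> A i \<Longrightarrow> y \<in> B j \<Longrightarrow> {x, y} \<in> E \<longleftrightarrow> {Inl i, Inr j} \<in> EH"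
  unfolding A_def B_def using Inl_Inr_in_irr_vertices part_edges by blast

lemma finite_A: "i \<in> {1..m} \<Longrightarrow> finite (A i)"
  and finite_B: "i \<in> {1..m} \<Longrightarrow> finite (B i)"
  unfolding A_def B_def using Inl_Inr_in_irr_vertices finite_part by auto

lemma inA_le: "i \<in> {1..m} \<Longrightarrow> inA X i \<le> n"
  and inB_le: "i \<in> {1..m} \<Longrightarrow> inB X i \<le> n"
  unfolding inA_def inB_def
  using card_mono[OF finite_A Int_lower2] card_mono[OF finite_B Int_lower2] card_A card_B
  by (simp_all add: of_nat_le_iff[symmetric] del: of_nat_le_iff)

lemma sum_inA:
  assumes "finite X" and S: "S \<subseteq> {1..m}"
  shows "(\<Sum>i\<in>S. inA X i) = card (X \<inter> (\<Union>i\<in>S. A i))"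
proof -
  have "card (X \<inter> (\<Union>i\<in>S. A i)) = (\<Sum>i\<in>S. card (X \<inter> A i))"
    using S by (intro card_Int_UN_disjoint[OF \<open>finite X\<close> finite_subset[OF S]] A_disjoint) auto
  then show ?thesis
    unfolding inA_def by simp
qed

lemma sum_inB:
  assumes "finite X" and S: "S \<subseteq> {1..m}"
  shows "(\<Sum>i\<in>S. inB X i) = card (X \<inter> (\<Union>i\<in>S. B i))"
proof -
  have "card (X \<inter> (\<Union>i\<in>S. B i)) = (\<Sum>i\<in>S. card (X \<inter> B i))"
    using S by (intro card_Int_UN_disjoint[OF \<open>finite X\<close> finite_subset[OF S]] B_disjoint) auto
  then show ?thesis
    unfolding inB_def by simp
qed

lemma sum_inA_inB_le_card: "finite X \<Longrightarrow> (\<Sum>i=1..m. inA X i) + (\<Sum>i=1..m. inB X i) \<le> card X"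
proof -
  assume "finite X"
  let ?XA = "X \<inter> (\<Union>i\<in>{1..m}. A i)" and ?XB = "X \<inter> (\<Union>i\<in>{1..m}. B i)"
  have "card ?XA + card ?XB = card (?XA \<union> ?XB)"
    using \<open>finite X\<close> A_B_disjoint by (intro card_Un_disjoint[symmetric]) blast+
  also have "\<dots> \<le> card X"
    using \<open>finite X\<close> by (intro card_mono) auto
  finally show ?thesis
    using sum_inA[OF \<open>finite X\<close>, of "{1..m}"] sum_inB[OF \<open>finite X\<close>, of "{1..m}"] by simp
qed

lemma card_diag_blocks:
  assumes "finite X" and "finite Y"
  shows "card (\<Union>i\<in>{1..m}. (X \<inter> A i) \<times> (Y \<inter> B i)) = diag X Y"
proof -
  have "card (\<Union>i\<in>{1..m}. (X \<inter> A i) \<times> (Y \<inter> B i)) = (\<Sum>i=1..m. card ((X \<inter> A i) \<times> (Y \<inter> B i)))"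
    using assms A_disjoint by (intro card_UN_disjoint) blast+
  then show ?thesis
    unfolding diag_def inA_def inB_def by (simp add: card_cartesian_product)
qed

lemma diag_blocks_subset_tau_pairs:
  "(\<Union>i\<in>{1..m}. (X \<inter> A i) \<times> (Y \<inter> B i)) \<subseteq> tau_pairs X Y"
proof
  fix p
  assume "p \<in> (\<Union>i\<in>{1..m}. (X \<inter> A i) \<times> (Y \<inter> B i))"
  then obtain i x y where "p = (x, y)" "i \<in> {1..m}" "x \<in> X \<inter> A i" "y \<in> Y \<inter> B i"
    by auto
  then show "p \<in> tau_pairs X Y"
    unfolding tau_pairs_def using edge_A_B[of i i x y] diagonal_edge[of i] by simp
qed

lemma swap_tau_pairs_subset: "prod.swap ` tau_pairs Y X \<subseteq> tau_pairs X Y"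
proof
  fix p
  assume "p \<in> prod.swap ` tau_pairs Y X"
  then obtain x y where "p = (x, y)" and "(y, x) \<in> tau_pairs Y X"
    by auto
  then show "p \<in> tau_pairs X Y"
    unfolding tau_pairs_def by (simp add: insert_commute)
qed

lemma diag_blocks_disjoint:
  "(\<Union>i\<in>{1..m}. (X \<inter> A i) \<times> (Y \<inter> B i)) \<inter> (\<Union>j\<in>{1..m}. (X \<inter> B j) \<times> (Y \<inter> A j)) = {}"
proof -
  have False if "x \<in> A i" "x \<in> B j" "i \<in> {1..m}" "j \<in> {1..m}" for x i j
    using A_B_disjoint that by blast
  then show ?thesis
    by blast
qed

lemma diag_add_diag_le_card_tau_pairs:
  assumes "finite X" and "finite Y"
  shows "diag X Y + diag Y X \<le> card (tau_pairs X Y)"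
proof -
  let ?D1 = "\<Union>i\<in>{1..m}. (X \<inter> A i) \<times> (Y \<inter> B i)"
  let ?D2 = "\<Union>i\<in>{1..m}. (X \<inter> B i) \<times> (Y \<inter> A i)"
  have D2_eq: "?D2 = prod.swap ` (\<Union>i\<in>{1..m}. (Y \<inter> A i) \<times> (X \<inter> B i))"
    by (simp add: image_UN product_swap)
  have "?D2 \<subseteq> prod.swap ` tau_pairs Y X"
    unfolding D2_eq using diag_blocks_subset_tau_pairs by (rule image_mono)
  then have "?D1 \<union> ?D2 \<subseteq> tau_pairs X Y"
    using diag_blocks_subset_tau_pairs swap_tau_pairs_subset by (meson Un_least subset_trans)
  moreover have "finite (tau_pairs X Y)"
    unfolding tau_pairs_def using assms by (auto intro: finite_subset[of _ "X \<times> Y"])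
  ultimately have "card (?D1 \<union> ?D2) \<le> card (tau_pairs X Y)"
    by (rule card_mono[rotated])
  moreover have "card (?D1 \<union> ?D2) = card ?D1 + card ?D2"
    using assms diag_blocks_disjoint by (intro card_Un_disjoint) simp_all
  moreover have "card ?D2 = diag Y X"
    unfolding D2_eq using card_diag_blocks[OF assms(2,1)] by (simp add: card_image)
  ultimately show ?thesis
    using card_diag_blocks[OF assms] by linarith
qed

lemma card_tau_pairs_le_of_lower_block:
  fixes eps :: real
  assumes reg: "regular_pair E eps X Y" and fin: "finite X" "finite Y" and "0 < eps"
    and ne: "X \<noteq> {}" "Y \<noteq> {}" and h: "h \<in> {1..m}"
    and upper: "eps * card X \<le> (\<Sum>i=h..m. inA X i)"
    and lower: "eps * card Y \<le> (\<Sum>i\<in>{1..<h}. inB Y i)"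
  shows "card (tau_pairs X Y) \<le> eps * card X * card Y"
proof -
  define X' where "X' = X \<inter> (\<Union>i\<in>{h..m}. A i)"
  define Y' where "Y' = Y \<inter> (\<Union>j\<in>{1..<h}. B j)"
  have card_X': "eps * card X \<le> card X'" and card_Y': "eps * card Y \<le> card Y'"
    unfolding X'_def Y'_def using upper lower h fin
    by (simp_all add: sum_inA sum_inB subset_iff)
  have "0 < eps * card X" "0 < eps * card Y"
    using \<open>0 < eps\<close> fin ne by (simp_all add: card_gt_0_iff)
  then have "X' \<noteq> {}" "Y' \<noteq> {}"
    using card_X' card_Y' by auto
  moreover have "\<forall>x\<in>X'. \<forall>y\<in>Y'. {x, y} \<in> E \<longleftrightarrow> \<not> tau"
  proof (intro ballI)
    fix x y
    assume "x \<in> X'" and "y \<in> Y'"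
    then obtain i j where ij: "i \<in> {h..m}" "j \<in> {1..<h}" and "x \<in> A i" "y \<in> B j"
      unfolding X'_def Y'_def by blast
    have "i \<in> {1..m}" "j \<in> {1..m}" "j < i"
      using ij h by auto
    then show "{x, y} \<in> E \<longleftrightarrow> \<not> tau"
      using edge_A_B[OF _ _ \<open>x \<in> A i\<close> \<open>y \<in> B j\<close>] lower_edge by blast
  qed
  ultimately have "card {(x, y) \<in> X \<times> Y. {x, y} \<in> E \<longleftrightarrow> tau} \<le> eps * card X * card Y"
    using card_X' card_Y' unfolding X'_def Y'_def
    by (intro regular_pair_homogeneous_subpair[OF reg fin]) auto
  then show ?thesis
    unfolding tau_pairs_def .
qed

end

locale irr_blowup_partition = irr_blowup +
  fixes eps :: real and P
  assumes eps_pos: "0 < eps" and regular: "regular_partition V E eps P"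
begin

lemma is_partition_P: "is_partition V P"
  using regular unfolding regular_partition_def by simp

lemma finite_P: "finite P"
  using finite_partition[OF is_partition_P finite_V] .

lemma finite_in_P: "X \<in> P \<Longrightarrow> finite X"
  using finite_partition_part[OF is_partition_P finite_V] .

lemma nonempty_in_P: "X \<in> P \<Longrightarrow> X \<noteq> {}"
  using is_partition_P unfolding is_partition_def by blast

lemma sum_card_P: "(\<Sum>X\<in>P. real (card X)) = 2 * m * n"
  using sum_card_partition[OF is_partition_P finite_V] card_V by (simp flip: of_nat_sum)

lemma sum_inA_P: "i \<in> {1..m} \<Longrightarrow> (\<Sum>X\<in>P. inA X i) = n"
  and sum_inB_P: "i \<in> {1..m} \<Longrightarrow> (\<Sum>X\<in>P. inB X i) = n"
  unfolding inA_def inB_def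
  using sum_card_Int_partition[OF is_partition_P finite_V A_subset_V] card_A
    sum_card_Int_partition[OF is_partition_P finite_V B_subset_V] card_B
  by (simp_all flip: of_nat_sum)

lemma diag_nonneg: "0 \<le> diag X Y"
  unfolding diag_def inA_def inB_def by (simp add: sum_nonneg)

lemma sum_diag: "(\<Sum>X\<in>P. \<Sum>Y\<in>P. diag X Y) = m * n ^ 2"
proof -
  have "(\<Sum>X\<in>P. \<Sum>Y\<in>P. diag X Y) = (\<Sum>X\<in>P. \<Sum>i=1..m. \<Sum>Y\<in>P. inA X i * inB Y i)"
    unfolding diag_def by (rule sum.cong[OF refl], rule sum.swap)
  also have "\<dots> = (\<Sum>i=1..m. (\<Sum>X\<in>P. inA X i) * (\<Sum>Y\<in>P. inB Y i))"
    by (subst sum.swap) (simp add: sum_product)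
  also have "\<dots> = m * n ^ 2"
    by (simp add: sum_inA_P sum_inB_P power2_eq_square)
  finally show ?thesis .
qed

lemma sum_diag_row: "(\<Sum>Y\<in>P. diag X Y) = n * (\<Sum>i=1..m. inA X i)"
proof -
  have "(\<Sum>Y\<in>P. diag X Y) = (\<Sum>i=1..m. inA X i * (\<Sum>Y\<in>P. inB Y i))"
    unfolding diag_def sum_distrib_left by (rule sum.swap)
  then show ?thesis
    by (simp add: sum_inB_P sum_distrib_left mult.commute)
qed

lemma sum_diag_column: "(\<Sum>Y\<in>P. diag Y X) = n * (\<Sum>i=1..m. inB X i)"
proof -
  have "(\<Sum>Y\<in>P. diag Y X) = (\<Sum>i=1..m. (\<Sum>Y\<in>P. inA Y i) * inB X i)"
    unfolding diag_def sum_distrib_right by (rule sum.swap)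
  then show ?thesis
    by (simp add: sum_inA_P sum_distrib_left)
qed

lemma sum_diag_add_row: "X \<in> P \<Longrightarrow> (\<Sum>Y\<in>P. diag X Y + diag Y X) \<le> real n * card X"
  using sum_inA_inB_le_card[OF finite_in_P]
  by (simp add: sum.distrib sum_diag_row sum_diag_column mult_left_mono flip: distrib_left)

lemma diag_add_le_row: "X \<in> P \<Longrightarrow> Y \<in> P \<Longrightarrow> diag X Y + diag Y X \<le> real n * card X"
  using sum_diag_add_row[of X] member_le_sum[of Y P "\<lambda>Y. diag X Y + diag Y X"] finite_P diag_nonneg
  by (simp add: add_nonneg_nonneg)

definition threshold where
  "threshold X = (SOME h. h \<in> {1..m} \<and> (\<Sum>i=Suc h..m. inA X i) < eps * card X
     \<and> (1 < h \<longrightarrow> eps * card X \<le> (\<Sum>i=h..m. inA X i)))"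

lemma threshold:
  assumes "X \<in> P"
  shows "threshold X \<in> {1..m}"
    and "(\<Sum>i=Suc (threshold X)..m. inA X i) < eps * card X"
    and "1 < threshold X \<Longrightarrow> eps * card X \<le> (\<Sum>i=threshold X..m. inA X i)"
proof -
  have "0 < eps * card X"
    using eps_pos finite_in_P[OF assms] nonempty_in_P[OF assms] by (simp add: card_gt_0_iff)
  then obtain h where "h \<in> {1..m}" "(\<Sum>i=Suc h..m. inA X i) < eps * card X"
      "1 < h \<Longrightarrow> eps * card X \<le> (\<Sum>i=h..m. inA X i)"
    using tail_sum_threshold[OF m_pos] by blast
  then have "\<exists>h. h \<in> {1..m} \<and> (\<Sum>i=Suc h..m. inA X i) < eps * card X
     \<and> (1 < h \<longrightarrow> eps * card X \<le> (\<Sum>i=h..m. inA X i))"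
    by blast
  from someI_ex[OF this] show "threshold X \<in> {1..m}"
    and "(\<Sum>i=Suc (threshold X)..m. inA X i) < eps * card X"
    and "1 < threshold X \<Longrightarrow> eps * card X \<le> (\<Sum>i=threshold X..m. inA X i)"
    unfolding threshold_def by blast+
qed

definition excess where
  "excess X Y = inA X (threshold X) * inB Y (threshold X)"

lemma excess_nonneg: "0 \<le> excess X Y"
  unfolding excess_def inA_def inB_def by simp

lemma sum_excess_row:
  assumes "X \<in> P"
  shows "(\<Sum>Y\<in>P. excess X Y) \<le> n ^ 2"
proof -
  have h: "threshold X \<in> {1..m}"
    using threshold(1)[OF assms] .
  then have "(\<Sum>Y\<in>P. excess X Y) = inA X (threshold X) * n"
    unfolding excess_def by (simp add: sum_distrib_left[symmetric] sum_inB_P)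
  also have "\<dots> \<le> real n * n"
    using inA_le[OF h] by (intro mult_right_mono) auto
  finally show ?thesis
    by (simp add: power2_eq_square)
qed

lemma diag_le_of_regular:
  assumes X: "X \<in> P" and Y: "Y \<in> P" and reg: "regular_pair E eps X Y"
  shows "diag X Y + diag Y X \<le> eps * card X * card Y
    \<or> diag X Y \<le> eps * n * (real (card X) + card Y) + excess X Y"
proof -
  let ?h = "threshold X"
  have h: "?h \<in> {1..m}"
    using threshold(1)[OF X] .
  show ?thesis
  proof (cases "1 < ?h \<and> eps * card Y \<le> (\<Sum>i\<in>{1..<?h}. inB Y i)")
    case True
    then have "card (tau_pairs X Y) \<le> eps * card X * card Y"
      using card_tau_pairs_le_of_lower_block[OF reg finite_in_P[OF X] finite_in_P[OF Y] eps_pos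
          nonempty_in_P[OF X] nonempty_in_P[OF Y] h] threshold(3)[OF X]
      by blast
    then show ?thesis
      using diag_add_diag_le_card_tau_pairs[OF finite_in_P[OF X] finite_in_P[OF Y]] by linarith
  next
    case False
    then have lower: "(\<Sum>i\<in>{1..<?h}. inB Y i) \<le> eps * card Y"
      using eps_pos by (cases "?h = 1") auto
    have "diag X Y \<le> n * (\<Sum>i\<in>{1..<?h}. inB Y i) + excess X Y + n * (\<Sum>i=Suc ?h..m. inA X i)"
      unfolding diag_def excess_def
      using h inA_le inB_le by (intro sum_mult_le_split) (auto simp: inA_def inB_def)
    also have "\<dots> \<le> n * (eps * card Y) + excess X Y + n * (eps * card X)"
      using lower threshold(2)[OF X] by (intro add_mono mult_left_mono) auto
    finally show ?thesis
      by (simp add: algebra_simps)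
  qed
qed

lemma diag_add_le_of_regular:
  assumes X: "X \<in> P" and Y: "Y \<in> P" and reg: "regular_pair E eps X Y"
  shows "diag X Y + diag Y X \<le> eps * card X * card Y + 2 * eps * n * (real (card X) + card Y) + excess X Y + excess Y X"
proof -
  have "0 \<le> 2 * eps * n * (real (card X) + card Y)" "0 \<le> eps * card X * card Y"
    using eps_pos by simp_all
  then show ?thesis
    using diag_le_of_regular[OF X Y reg] diag_le_of_regular[OF Y X regular_pair_commute[OF reg]]
      excess_nonneg[of X Y] excess_nonneg[of Y X] diag_nonneg[of X Y] diag_nonneg[of Y X]
    by (auto simp: algebra_simps)
qed

lemma diag_add_le_of_large:
  assumes X: "X \<in> P" and Y: "Y \<in> P" and large: "2 * n \<le> card X"
  shows "diag X Y + diag Y X \<le> card X * card Y / 2"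
proof -
  have "diag X Y + diag Y X \<le> n * card Y"
    using diag_add_le_row[OF Y X] by simp
  also have "\<dots> \<le> card X * card Y / 2"
  proof -
    have "real (2 * n) * card Y \<le> real (card X) * card Y"
      using large by (intro mult_right_mono) simp_all
    then show ?thesis
      by simp
  qed
  finally show ?thesis .
qed

lemma diag_add_le_pair_bound:
  assumes X: "X \<in> P" and Y: "Y \<in> P"
  shows "diag X Y + diag Y X \<le> eps * card X * card Y
    + (if regular_pair E eps X Y then 0 else real (card X) * card Y) / 2
    + 2 * eps * n * (real (card X) + card Y) + excess X Y + excess Y X
    + (if card X < 2 * n then diag X Y + diag Y X else 0)"
proof -
  have nonneg: "0 \<le> eps * card X * card Y" "0 \<le> 2 * eps * n * (real (card X) + card Y)"
    "0 \<le> excess X Y" "0 \<le> excess Y X" "0 \<le> diag X Y + diag Y X"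
    using eps_pos excess_nonneg diag_nonneg by simp_all
  show ?thesis
  proof (cases "regular_pair E eps X Y")
    case True
    then show ?thesis
      using diag_add_le_of_regular[OF X Y] nonneg by (simp add: mult.assoc)
  next
    case False
    then show ?thesis
      using diag_add_le_of_large[OF X Y] nonneg by (cases "card X < 2 * n") auto
  qed
qed

lemma sum_sum_card_mult: "(\<Sum>X\<in>P. \<Sum>Y\<in>P. real (card X) * card Y) = (2 * m * n) ^ 2"
  using sum_card_P by (simp add: sum_product[symmetric] power2_eq_square)

lemma sum_sum_card_add: "(\<Sum>X\<in>P. \<Sum>Y\<in>P. real (card X) + card Y) = 2 * card P * (2 * m * n)"
  using sum_card_P by (simp add: sum.distrib sum_distrib_left[symmetric] sum_distrib_right[symmetric])

lemma sum_sum_excess: "(\<Sum>X\<in>P. \<Sum>Y\<in>P. excess X Y) \<le> real (card P) * n ^ 2"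
  using sum_mono[of P "\<lambda>X. \<Sum>Y\<in>P. excess X Y" "\<lambda>_. real n ^ 2"] sum_excess_row by simp

lemma sum_sum_diag_small_rows:
  "(\<Sum>X\<in>P. \<Sum>Y\<in>P. if card X < 2 * n then diag X Y + diag Y X else 0) \<le> 2 * real (card P) * n ^ 2"
proof -
  have "(\<Sum>Y\<in>P. if card X < 2 * n then diag X Y + diag Y X else 0) \<le> 2 * real n ^ 2" if "X \<in> P" for X
  proof (cases "card X < 2 * n")
    case True
    have "(\<Sum>Y\<in>P. diag X Y + diag Y X) \<le> real n * card X"
      using sum_diag_add_row[OF that] .
    also have "\<dots> \<le> real n * (2 * n)"
      using True by (intro mult_left_mono) simp_all
    finally show ?thesis
      using True by (simp add: power2_eq_square)
  qed simp
  then have "(\<Sum>X\<in>P. \<Sum>Y\<in>P. if card X < 2 * n then diag X Y + diag Y X else 0) \<le> (\<Sum>X\<in>P. 2 * real n ^ 2)"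
    by (intro sum_mono)
  then show ?thesis
    by (simp add: algebra_simps)
qed

lemma m_le_card_P: "real m \<le> 3 * eps * m ^ 2 + 4 * eps * m * card P + 2 * card P"
proof -
  let ?k = "real (card P)" and ?N = "real (2 * m * n)"
  let ?irr = "\<lambda>X Y. if regular_pair E eps X Y then 0 else real (card X) * card Y"
  let ?small = "\<lambda>X Y. if card X < 2 * n then diag X Y + diag Y X else 0"
  have "2 * m * n ^ 2 = (\<Sum>X\<in>P. \<Sum>Y\<in>P. diag X Y + diag Y X)"
    using sum_diag sum.swap[of "\<lambda>X Y. diag Y X" P P] by (simp add: sum.distrib)
  also have "\<dots> \<le> (\<Sum>X\<in>P. \<Sum>Y\<in>P. eps * card X * card Y + ?irr X Y / 2
      + 2 * eps * n * (real (card X) + card Y) + excess X Y + excess Y X + ?small X Y)"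
    by (intro sum_mono diag_add_le_pair_bound)
  also have "\<dots> = (\<Sum>X\<in>P. \<Sum>Y\<in>P. eps * card X * card Y) + (\<Sum>X\<in>P. \<Sum>Y\<in>P. ?irr X Y / 2)
      + (\<Sum>X\<in>P. \<Sum>Y\<in>P. 2 * eps * n * (real (card X) + card Y))
      + (\<Sum>X\<in>P. \<Sum>Y\<in>P. excess X Y) + (\<Sum>X\<in>P. \<Sum>Y\<in>P. excess Y X)
      + (\<Sum>X\<in>P. \<Sum>Y\<in>P. ?small X Y)"
    by (simp only: sum.distrib)
  also have "\<dots> \<le> eps * ?N ^ 2 + eps * ?N ^ 2 / 2 + 2 * eps * n * (2 * ?k * ?N)
      + ?k * n ^ 2 + ?k * n ^ 2 + 2 * ?k * n ^ 2"
  proof -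
    have "(\<Sum>X\<in>P. \<Sum>Y\<in>P. eps * card X * card Y) = eps * ?N ^ 2"
      using sum_sum_card_mult by (simp add: mult.assoc flip: sum_distrib_left)
    moreover have "(\<Sum>X\<in>P. \<Sum>Y\<in>P. ?irr X Y / 2) \<le> eps * ?N ^ 2 / 2"
      using regular_partition_irregular_mass[OF regular finite_V] card_V
      by (simp flip: sum_divide_distrib)
    moreover have "(\<Sum>X\<in>P. \<Sum>Y\<in>P. 2 * eps * n * (real (card X) + card Y)) = 2 * eps * n * (2 * ?k * ?N)"
      using sum_sum_card_add by (simp flip: sum_distrib_left)
    moreover have "(\<Sum>X\<in>P. \<Sum>Y\<in>P. excess Y X) = (\<Sum>X\<in>P. \<Sum>Y\<in>P. excess X Y)"
      by (rule sum.swap)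
    ultimately show ?thesis
      using sum_sum_excess sum_sum_diag_small_rows by linarith
  qed
  also have "\<dots> = n ^ 2 * (6 * eps * m ^ 2 + 8 * eps * m * ?k + 4 * ?k)"
    by (simp add: power2_eq_square algebra_simps)
  finally have "n ^ 2 * (2 * m) \<le> n ^ 2 * (6 * eps * m ^ 2 + 8 * eps * m * ?k + 4 * ?k)"
    by (simp add: algebra_simps)
  then show ?thesis
    using n_pos by simp
qed

lemma m_le_12_card_P:
  assumes "eps * m = 1 / 4"
  shows "real m \<le> 12 * card P"
proof -
  have "real m \<le> 3 * (eps * m) * m + 4 * (eps * m) * card P + 2 * card P"
    using m_le_card_P by (simp add: power2_eq_square algebra_simps)
  then show ?thesis
    unfolding assms by linarith
qed

end

lemma Irr_diagonal_lower_pattern: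
  assumes "EH \<in> Irr m"
  obtains tau where "\<And>i. i \<in> {1..m} \<Longrightarrow> {Inl i, Inr i} \<in> EH \<longleftrightarrow> tau"
    and "\<And>i j. i \<in> {1..m} \<Longrightarrow> j \<in> {1..m} \<Longrightarrow> j < i \<Longrightarrow> {Inl i, Inr j} \<in> EH \<longleftrightarrow> \<not> tau"
proof -
  consider "\<forall>i\<in>{1..m}. \<forall>j\<in>{1..m}. {Inl i, Inr j} \<in> EH \<longleftrightarrow> i \<le> j"
    | "\<forall>i\<in>{1..m}. \<forall>j\<in>{1..m}. {Inl i, Inr j} \<in> EH \<longleftrightarrow> i = j"
    | "\<forall>i\<in>{1..m}. \<forall>j\<in>{1..m}. {Inl i, Inr j} \<in> EH \<longleftrightarrow> i \<noteq> j"
    using assms unfolding Irr_def by blast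
  then show ?thesis
    by cases (rule that; force)+
qed

theorem lemma3p31:
  fixes s1 s2 :: real
  assumes "0 < s1" "s1 < 1 - s1" "1 - s1 < s2" "s2 < 1"
  shows "\<exists>eps0 > 0. \<forall>eps. 0 < eps \<and> eps < eps0 \<longrightarrow>
           (\<forall>m :: nat. real m = 1 / (4 * eps) \<longrightarrow>
             (\<exists>n0 :: nat. \<forall>n \<ge> n0. \<forall>EH \<in> Irr m. \<forall>(V :: 'v set) E.
                is_blowup n (irr_vertices m) EH V E \<longrightarrow>
                (\<forall>P. regular_partition V E eps P \<longrightarrow> real (card P) \<ge> eps powr (- s2))))"
proof (intro exI[of _ "(1/48) powr (1 / (1 - s2))"] conjI allI impI exI[of _ 1] ballI)
  fix eps :: real and m n :: nat and EH and V :: "'v set" and E P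
  assume eps: "0 < eps \<and> eps < (1/48) powr (1 / (1 - s2))" and m: "real m = 1 / (4 * eps)"
    and "1 \<le> n" and "EH \<in> Irr m" and blowup: "is_blowup n (irr_vertices m) EH V E"
    and "regular_partition V E eps P"
  have eps_m: "eps * m = 1 / 4"
    using m eps by (simp add: field_simps)
  then have "1 \<le> m"
    by (cases m) auto
  obtain tau where "\<And>i. i \<in> {1..m} \<Longrightarrow> {Inl i, Inr i} \<in> EH \<longleftrightarrow> tau"
    and "\<And>i j. i \<in> {1..m} \<Longrightarrow> j \<in> {1..m} \<Longrightarrow> j < i \<Longrightarrow> {Inl i, Inr j} \<in> EH \<longleftrightarrow> \<not> tau"
    using Irr_diagonal_lower_pattern[OF \<open>EH \<in> Irr m\<close>] by blast
  with blowup \<open>1 \<le> m\<close> \<open>1 \<le> n\<close> eps \<open>regular_partition V E eps P\<close>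
  obtain part where "irr_blowup_partition m n part V E EH tau eps P"
    unfolding is_blowup_def irr_blowup_partition_def irr_blowup_def irr_blowup_partition_axioms_def
    by blast
  then have "real m \<le> 12 * card P"
    by (rule irr_blowup_partition.m_le_12_card_P[OF _ eps_m])
  moreover have "1 / (48 * eps) = real m / 12"
    using m by simp
  ultimately have "1 / (48 * eps) \<le> card P"
    by linarith
  moreover have "eps powr (- s2) \<le> (1 / 48) / eps"
    using \<open>s2 < 1\<close> eps by (intro powr_neg_le_divide) auto
  ultimately show "real (card P) \<ge> eps powr (- s2)"
    by simp
qed (simp)

end
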